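(* Let $p\geq 2$ be an integer, $r=\lceil\log_2(p-1)\rceil$ and $N_r=\binom{\lceil r/2\rceil+1}{2}+\binom{\lfloor r/2\rfloor+1}{2}$. For every integer $0\leq q\leq p-1$ and every integer $m\geq 2N_r+2$, $$\mathrm{forb}(m,3,F(p-q,p,p,p-q))\geq \mathrm{forb}(m,3,p\cdot K_2)-qN_r.$$
   Context: An $s$-matrix has entries in $\{0,\dots,s-1\}$; simple means no repeated columns. $F\prec A$ means some submatrix of $A$ is a row/column permutation of $F$. $\mathrm{forb}(m,s,F)$ is the maximum number of columns of an $m$-rowed simple $s$-matrix $A$ with $F\not\prec A$. $F(a,b,c,d)$ is the 2-rowed $(0,1)$-matrix with $a$ columns $\binom00$, $b$ columns $\binom10$, $c$ columns $\binom01$, $d$ columns $\binom11$. $K_2$ is the $2\times4$ matrix of all $(0,1)$-columns of length 2 and $p\cdot K_2$ the concatenation of $p$ copies of it. *)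

theory Defs
  imports Complex_Main
begin

text \<open>A matrix is represented as the list of its columns; each column is a list
  of entries (row 0 first). An m-rowed s-matrix: every column has length m and
  all entries lie in {0,...,s-1}.\<close>

type_synonym mat = "nat list list"

definition is_smatrix :: "nat \<Rightarrow> nat \<Rightarrow> mat \<Rightarrow> bool" where
  "is_smatrix m s A \<longleftrightarrow> (\<forall>c\<in>set A. length c = m \<and> (\<forall>x\<in>set c. x < s))"

definition simple :: "mat \<Rightarrow> bool" where
  "simple A \<longleftrightarrow> distinct A"

definition config :: "nat \<Rightarrow> nat \<Rightarrow> mat \<Rightarrow> mat \<Rightarrow> bool" where
  "config k m F A \<longleftrightarrow>
     (\<exists>\<sigma> \<tau>. inj_on \<sigma> {..<k} \<and> (\<forall>i<k. \<sigma> i < m) \<and>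
            inj_on \<tau> {..<length F} \<and> (\<forall>j<length F. \<tau> j < length A) \<and>
            (\<forall>i<k. \<forall>j<length F. F ! j ! i = A ! (\<tau> j) ! (\<sigma> i)))"

definition forb :: "nat \<Rightarrow> nat \<Rightarrow> nat \<Rightarrow> mat \<Rightarrow> nat" where
  "forb m s k F = Max {length A | A. is_smatrix m s A \<and> simple A \<and> \<not> config k m F A}"

definition Fmat :: "nat \<Rightarrow> nat \<Rightarrow> nat \<Rightarrow> nat \<Rightarrow> mat" where
  "Fmat a b c d = replicate a [0,0] @ replicate b [1,0] @ replicate c [0,1] @ replicate d [1,1]"

definition K2 :: mat where
  "K2 = [[0,0],[1,0],[0,1],[1,1]]"

definition copiesK2 :: "nat \<Rightarrow> mat" where
  "copiesK2 p = concat (replicate p K2)"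

end

theory Submission
  imports Defs
begin

lemma length_le_power_if_simple:
  assumes "is_smatrix m s A" and "simple A"
  shows "length A \<le> s ^ m"
proof -
  have "set A \<subseteq> {c. set c \<subseteq> {..<s} \<and> length c = m}"
    using assms(1) by (auto simp: is_smatrix_def)
  then have "card (set A) \<le> s ^ m"
    using card_mono[OF finite_lists_length_eq[of "{..<s}" m]] by (simp add: card_lists_length_eq)
  then show ?thesis using assms(2) by (simp add: simple_def distinct_card)
qed

lemma length_le_forb:
  assumes "is_smatrix m s A" and "simple A" and "\<not> config k m F A"
  shows "length A \<le> forb m s k F"
proof -
  have "{length A | A. is_smatrix m s A \<and> simple A \<and> \<not> config k m F A} \<subseteq> {..s ^ m}"
    using length_le_power_if_simple by auto
  then show ?thesis
    unfolding forb_def using assms by (intro Max_ge) (auto intro: finite_subset)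
qed

lemma forb_le:
  assumes "F \<noteq> []"
    and "\<And>A. is_smatrix m s A \<Longrightarrow> simple A \<Longrightarrow> \<not> config k m F A \<Longrightarrow> length A \<le> n"
  shows "forb m s k F \<le> n"
proof -
  have "\<not> config k m F []" using assms(1) by (auto simp: config_def)
  moreover have "is_smatrix m s []" "simple []" by (simp_all add: is_smatrix_def simple_def)
  ultimately have "{length A | A. is_smatrix m s A \<and> simple A \<and> \<not> config k m F A} \<noteq> {}"
    by blast
  moreover have "{length A | A. is_smatrix m s A \<and> simple A \<and> \<not> config k m F A} \<subseteq> {..s ^ m}"
    using length_le_power_if_simple by auto
  ultimately show ?thesis
    unfolding forb_def using assms(2) by (intro Max.boundedI) (auto intro: finite_subset)
qed

lemma count_list_replicate: "count_list (replicate n x) y = (if x = y then n else 0)"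
  by (induction n) auto

lemma count_list_conv_card: "count_list xs v = card {j. j < length xs \<and> xs ! j = v}"
  by (simp add: count_list_eq_length_filter length_filter_conv_card eq_commute)

lemma card_indices_eq_card_elements:
  assumes "distinct A"
  shows "card {t. t < length A \<and> P (A ! t)} = card {c \<in> set A. P c}"
proof -
  have "bij_betw ((!) A) {t. t < length A \<and> P (A ! t)} {c \<in> set A. P c}"
    using assms by (auto simp: bij_betw_def inj_on_def nth_eq_iff_index_eq in_set_conv_nth)
  then show ?thesis by (rule bij_betw_same_card)
qed

lemma count_list_Fmat:
  "count_list (Fmat a b c d) v =
     (if v = [0,0] then a else if v = [1,0] then b else if v = [0,1] then c else if v = [1,1] then d else 0)"
  by (simp add: Fmat_def count_list_replicate)

lemma count_list_copiesK2: "count_list (copiesK2 p) v = (if v \<in> set K2 then p else 0)"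
  by (induction p) (auto simp: copiesK2_def K2_def)

lemma copiesK2_column_length: "\<forall>v\<in>set (copiesK2 p). length v = 2"
  by (auto simp: copiesK2_def K2_def)

lemma count_list_copiesK2_rev: "count_list (copiesK2 p) (rev v) = count_list (copiesK2 p) v"
proof -
  have "rev v \<in> set K2 \<longleftrightarrow> v \<in> set K2" by (auto simp: K2_def)
  then show ?thesis by (simp add: count_list_copiesK2)
qed

definition restrict_col :: "nat list \<Rightarrow> (nat \<Rightarrow> nat) \<Rightarrow> nat \<Rightarrow> nat list" where
  "restrict_col c \<sigma> k = map (\<lambda>i. c ! \<sigma> i) [0..<k]"

lemma counts_le_if_config:
  assumes "distinct A" and "\<forall>v\<in>set F. length v = k" and "config k m F A"
  obtains \<sigma> where "inj_on \<sigma> {..<k}" and "\<forall>i<k. \<sigma> i < m"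
    and "\<And>v. count_list F v \<le> card {c \<in> set A. restrict_col c \<sigma> k = v}"
proof -
  obtain \<sigma> \<tau> where \<sigma>: "inj_on \<sigma> {..<k}" "\<forall>i<k. \<sigma> i < m"
    and \<tau>: "inj_on \<tau> {..<length F}" "\<forall>j<length F. \<tau> j < length A"
    and entries: "\<forall>i<k. \<forall>j<length F. F ! j ! i = A ! (\<tau> j) ! (\<sigma> i)"
    using assms(3) unfolding config_def by blast
  have restrict_eq: "restrict_col (A ! \<tau> j) \<sigma> k = F ! j" if "j < length F" for j
    using that entries assms(2) by (auto simp: restrict_col_def intro: nth_equalityI)
  have "count_list F v \<le> card {c \<in> set A. restrict_col c \<sigma> k = v}" for v
    unfolding count_list_conv_card
  proof (rule card_inj_on_le[where f = "\<lambda>j. A ! \<tau> j"])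
    show "inj_on (\<lambda>j. A ! \<tau> j) {j. j < length F \<and> F ! j = v}"
      using \<tau> assms(1) by (auto simp: inj_on_def nth_eq_iff_index_eq)
  qed (use \<tau> restrict_eq in auto)
  with \<sigma> show ?thesis using that by blast
qed

lemma config_if_counts_le:
  assumes "distinct A" and "\<forall>v\<in>set F. length v = k"
    and \<sigma>: "inj_on \<sigma> {..<k}" "\<forall>i<k. \<sigma> i < m"
    and counts: "\<And>v. count_list F v \<le> card {c \<in> set A. restrict_col c \<sigma> k = v}"
  shows "config k m F A"
proof -
  define S where "S v = {j. j < length F \<and> F ! j = v}" for v
  define T where "T v = {t. t < length A \<and> restrict_col (A ! t) \<sigma> k = v}" for v
  have "\<exists>g. g ` S v \<subseteq> T v \<and> inj_on g (S v)" for v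
    using counts[of v] card_indices_eq_card_elements[OF assms(1), of "\<lambda>c. restrict_col c \<sigma> k = v"]
    by (intro card_le_inj) (auto simp: S_def T_def count_list_conv_card)
  then obtain g where g: "\<And>v. g v ` S v \<subseteq> T v" "\<And>v. inj_on (g v) (S v)" by metis
  \<comment> \<open>the columns of F equal to v are matched injectively with columns of A restricting to v\<close>
  define \<tau> where "\<tau> j = g (F ! j) j" for j
  have \<tau>_T: "\<tau> j \<in> T (F ! j)" if "j < length F" for j
    using g(1) that by (auto simp: \<tau>_def S_def)
  have "inj_on \<tau> {..<length F}"
  proof (rule inj_onI)
    fix j j' assume j: "j \<in> {..<length F}" "j' \<in> {..<length F}" and eq: "\<tau> j = \<tau> j'"
    then have "F ! j = F ! j'" using \<tau>_T by (metis (mono_tags) T_def lessThan_iff mem_Collect_eq)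
    then show "j = j'" using g(2)[of "F ! j"] eq j by (auto simp: \<tau>_def S_def inj_on_def)
  qed
  moreover have "F ! j ! i = A ! \<tau> j ! \<sigma> i" if "i < k" "j < length F" for i j
  proof -
    have "restrict_col (A ! \<tau> j) \<sigma> k = F ! j" using \<tau>_T[OF that(2)] by (simp add: T_def)
    then show ?thesis using that by (auto simp: restrict_col_def dest: arg_cong[where f = "\<lambda>xs. xs ! i"])
  qed
  moreover have "\<forall>j<length F. \<tau> j < length A" using \<tau>_T by (simp add: T_def)
  ultimately show "config k m F A" unfolding config_def using \<sigma> by blast
qed

lemma config_two_rows_iff:
  assumes "distinct A" and "\<forall>v\<in>set F. length v = 2"
    and symmetric: "\<forall>v. count_list F (rev v) = count_list F v"
  shows "config 2 m F A \<longleftrightarrow>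
           (\<exists>i j. i < j \<and> j < m \<and> (\<forall>v. count_list F v \<le> card {c \<in> set A. [c ! i, c ! j] = v}))"
    (is "_ \<longleftrightarrow> (\<exists>i j. ?rows i j)")
proof -
  have restrict_two: "restrict_col c \<sigma> 2 = [c ! \<sigma> 0, c ! \<sigma> 1]" for c \<sigma>
    by (simp add: restrict_col_def numeral_2_eq_2)
  have swap: "{c \<in> set A. [c ! j, c ! i] = v} = {c \<in> set A. [c ! i, c ! j] = rev v}" for i j v
    by (rule Collect_cong) (metis rev_swap rev.simps append_Cons append_Nil)
  have rows_if_counts: "\<exists>i j. ?rows i j" if \<sigma>: "inj_on \<sigma> {..<2}" "\<forall>i<2. \<sigma> i < m"
    and counts: "\<forall>v. count_list F v \<le> card {c \<in> set A. [c ! \<sigma> 0, c ! \<sigma> 1] = v}"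
    for \<sigma> :: "nat \<Rightarrow> nat"
  proof -
    have "\<sigma> 0 \<noteq> \<sigma> 1" using inj_onD[OF \<sigma>(1), of 0 1] by auto
    moreover have bounds: "\<sigma> 0 < m" "\<sigma> 1 < m" using \<sigma>(2) by auto
    ultimately consider "\<sigma> 0 < \<sigma> 1" | "\<sigma> 1 < \<sigma> 0" by linarith
    then show ?thesis
    proof cases
      case 1
      then show ?thesis using bounds counts by blast
    next
      case 2
      have "count_list F v \<le> card {c \<in> set A. [c ! \<sigma> 1, c ! \<sigma> 0] = v}" for v
      proof -
        have "count_list F v = count_list F (rev v)" using symmetric by simp
        also have "\<dots> \<le> card {c \<in> set A. [c ! \<sigma> 0, c ! \<sigma> 1] = rev v}" using counts by blast
        also have "\<dots> = card {c \<in> set A. [c ! \<sigma> 1, c ! \<sigma> 0] = v}"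
          by (simp only: swap[where i = "\<sigma> 0" and j = "\<sigma> 1"])
        finally show ?thesis .
      qed
      then show ?thesis using 2 bounds by blast
    qed
  qed
  have config_if_rows: "config 2 m F A" if rows: "?rows i j" for i j
  proof (rule config_if_counts_le[OF assms(1,2)])
    show "inj_on (\<lambda>k::nat. if k = 0 then i else j) {..<2}"
      using rows by (auto simp: inj_on_def)
  qed (use rows in \<open>auto simp: restrict_two\<close>)
  show ?thesis
  proof
    assume "config 2 m F A"
    then obtain \<sigma> :: "nat \<Rightarrow> nat" where "inj_on \<sigma> {..<2}" "\<forall>i<2. \<sigma> i < m"
      "\<And>v. count_list F v \<le> card {c \<in> set A. restrict_col c \<sigma> 2 = v}"
      by (rule counts_le_if_config[OF assms(1,2)]) blast+
    then show "\<exists>i j. ?rows i j" unfolding restrict_two by (intro rows_if_counts) auto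
  qed (use config_if_rows in blast)
qed

definition pairs :: "nat \<Rightarrow> (nat \<times> nat) set" where
  "pairs n = {(i, j). i < j \<and> j < n}"

lemma finite_pairs [simp]: "finite (pairs n)"
  by (rule finite_subset[of _ "{..<n} \<times> {..<n}"]) (auto simp: pairs_def)

lemma card_pairs: "card (pairs n) = n choose 2"
proof (induction n)
  case (Suc n)
  have "pairs (Suc n) = pairs n \<union> (\<lambda>i. (i, n)) ` {..<n}" by (auto simp: pairs_def)
  moreover have "pairs n \<inter> (\<lambda>i. (i, n)) ` {..<n} = {}" by (auto simp: pairs_def)
  ultimately have "card (pairs (Suc n)) = card (pairs n) + n"
    by (simp add: card_Un_disjoint card_image inj_on_def)
  then show ?case using Suc.IH by (simp add: numeral_2_eq_2)
qed (simp add: pairs_def)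

definition base_size :: "nat \<Rightarrow> nat" where
  "base_size m = (\<Sum>Z\<in>Pow {..<m}. card Z + 1)"

definition shatters_pair :: "nat list set \<Rightarrow> nat \<Rightarrow> nat \<Rightarrow> bool" where
  "shatters_pair V i j \<longleftrightarrow> (\<forall>x<2. \<forall>y<2. \<exists>c\<in>V. c ! i = x \<and> c ! j = y)"

lemma shatters_pair_commute: "shatters_pair V i j \<longleftrightarrow> shatters_pair V j i"
  unfolding shatters_pair_def by blast

lemma shatters_pair_erase_row:
  assumes "i \<noteq> z" and "j \<noteq> z"
  shows "shatters_pair ((\<lambda>c. c[z := 0]) ` V) i j \<longleftrightarrow> shatters_pair V i j"
  using assms by (simp add: shatters_pair_def)

definition zero_one_on :: "nat \<Rightarrow> nat set \<Rightarrow> nat list set \<Rightarrow> bool" where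
  "zero_one_on n Z V \<longleftrightarrow> (\<forall>c\<in>V. length c = n \<and> (\<forall>k\<in>Z. c ! k < 2)) \<and>
     (\<forall>c\<in>V. \<forall>d\<in>V. \<forall>k<n. k \<notin> Z \<longrightarrow> c ! k = d ! k)"

lemma zero_one_on_erase_row:
  assumes "zero_one_on n (insert z Z) V" and "z < n"
  shows "zero_one_on n Z ((\<lambda>c. c[z := 0]) ` V)"
  unfolding zero_one_on_def
proof (intro conjI ballI allI impI)
  fix c assume "c \<in> (\<lambda>c. c[z := 0]) ` V"
  then obtain c' where c': "c' \<in> V" "c = c'[z := 0]" by blast
  then show "length c = n" using assms(1) by (simp add: zero_one_on_def)
  fix k assume "k \<in> Z"
  then show "c ! k < 2" using c' assms by (cases "k = z") (auto simp: zero_one_on_def)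
next
  fix c d k assume "c \<in> (\<lambda>c. c[z := 0]) ` V" "d \<in> (\<lambda>c. c[z := 0]) ` V" "k < n" "k \<notin> Z"
  then obtain c' d' where c': "c' \<in> V" "c = c'[z := 0]" and d': "d' \<in> V" "d = d'[z := 0]" by blast
  show "c ! k = d ! k"
  proof (cases "k = z")
    case True
    then show ?thesis using c' d' assms by (simp add: zero_one_on_def)
  next
    case False
    then have "c' ! k = d' ! k"
      using c'(1) d'(1) assms(1) \<open>k < n\<close> \<open>k \<notin> Z\<close> unfolding zero_one_on_def by blast
    then show ?thesis using c'(2) d'(2) False by simp
  qed
qed

lemma card_flippable_columns_le_one:
  assumes "finite V" and "zero_one_on n (insert z Z) V" and "z < n"
    and "\<forall>k\<in>Z. k \<noteq> z \<longrightarrow> \<not> shatters_pair V k z"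
  shows "card {c \<in> V. c ! z = 0 \<and> c[z := 1] \<in> V} \<le> 1"
proof -
  let ?D = "{c \<in> V. c ! z = 0 \<and> c[z := 1] \<in> V}"
  have "c = c'" if c: "c \<in> ?D" and c': "c' \<in> ?D" for c c'
  proof (rule ccontr)
    assume "c \<noteq> c'"
    moreover have len: "length c = n" "length c' = n"
      using c c' assms(2) by (auto simp: zero_one_on_def)
    ultimately obtain k where k: "k < n" "c ! k \<noteq> c' ! k" by (metis nth_equalityI)
    have "k \<noteq> z" using k(2) c c' by auto
    then have "k \<in> Z" using assms(2) c c' k unfolding zero_one_on_def by blast
    then obtain x y where xy: "x < 2" "y < 2" "\<forall>d\<in>V. \<not> (d ! k = x \<and> d ! z = y)"
      using assms(4) \<open>k \<noteq> z\<close> unfolding shatters_pair_def by blast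
    \<comment> \<open>a column of ?D together with its flip at row z realizes both values at row z\<close>
    have no_x: "u ! k \<noteq> x" if u: "u \<in> ?D" "length u = n" for u
    proof
      assume "u ! k = x"
      moreover have "u ! z = 0" "u[z := 1] ! k = u ! k" "u[z := 1] ! z = 1"
        using u \<open>k \<noteq> z\<close> assms(3) by simp_all
      moreover have "\<not> (u ! k = x \<and> u ! z = y)" "\<not> (u[z := 1] ! k = x \<and> u[z := 1] ! z = y)"
        using xy(3) u(1) by blast+
      ultimately show False using xy(2) by linarith
    qed
    have "c ! k < 2" "c' ! k < 2" using c c' \<open>k \<in> Z\<close> assms(2) by (auto simp: zero_one_on_def)
    then show False using no_x[OF c len(1)] no_x[OF c' len(2)] xy(1) k(2) by linarith
  qed
  then show ?thesis
    using card_le_Suc0_iff_eq[of ?D] assms(1) by (simp add: One_nat_def)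
qed

lemma card_le_card_erase_row:
  fixes V :: "nat list set"
  assumes "finite V" and "\<forall>c\<in>V. c ! z < 2"
  shows "card V \<le> card ((\<lambda>c. c[z := 0]) ` V) + card {c \<in> V. c ! z = 0 \<and> c[z := 1] \<in> V}"
proof -
  define h where "h c = c[z := 0]" for c :: "nat list"
  define V0 where "V0 = {c \<in> V. c ! z = 0}"
  define V1 where "V1 = {c \<in> V. c ! z = 1}"
  have "V = V0 \<union> V1" using assms(2) by (auto simp: V0_def V1_def less_2_cases_iff)
  moreover have "h ` V = V0 \<union> h ` V1"
  proof -
    have "h c = c" if "c \<in> V0" for c using that list_update_id[of c z] by (simp add: V0_def h_def)
    then have "h ` V0 = V0" by simp
    then show ?thesis using \<open>V = V0 \<union> V1\<close> by (metis image_Un)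
  qed
  moreover have "inj_on h V1"
  proof (rule inj_onI)
    fix c c' assume "c \<in> V1" "c' \<in> V1" "h c = h c'"
    then have "c[z := c ! z] = c'[z := c' ! z]"
      by (simp add: V1_def h_def) (metis list_update_overwrite)
    then show "c = c'" by simp
  qed
  moreover have "finite V0" "finite V1" "V0 \<inter> V1 = {}"
    using assms(1) by (auto simp: V0_def V1_def)
  ultimately have card_V: "card V = card V0 + card (h ` V1)"
    and card_hV: "card (h ` V) + card (V0 \<inter> h ` V1) = card V0 + card (h ` V1)"
    using card_Un_Int[of V0 "h ` V1"] by (simp_all add: card_Un_disjoint card_image)
  \<comment> \<open>a column of V0 in the image of V1 is one whose flip at row z lies in V\<close>
  have "V0 \<inter> h ` V1 \<subseteq> {c \<in> V. c ! z = 0 \<and> c[z := 1] \<in> V}"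
    by (auto simp: V0_def V1_def h_def) (metis list_update_id)
  then have "card (V0 \<inter> h ` V1) \<le> card {c \<in> V. c ! z = 0 \<and> c[z := 1] \<in> V}"
    using assms(1) by (intro card_mono) auto
  then show ?thesis using card_V card_hV unfolding h_def by linarith
qed

lemma card_le_Suc_if_no_shattered_pair:
  assumes "finite Z" and "Z \<subseteq> {..<n}" and "finite V" and "zero_one_on n Z V"
    and "\<forall>i\<in>Z. \<forall>j\<in>Z. i \<noteq> j \<longrightarrow> \<not> shatters_pair V i j"
  shows "card V \<le> card Z + 1"
  using assms
proof (induction Z arbitrary: V rule: finite_induct)
  case empty
  have "c = d" if "c \<in> V" "d \<in> V" for c d
    using empty.prems(3) that unfolding zero_one_on_def by (metis nth_equalityI empty_iff)
  then show ?case using card_le_Suc0_iff_eq[OF \<open>finite V\<close>] by simp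
next
  case (insert z Z)
  have z: "z < n" "z \<notin> Z" using insert by auto
  have "card ((\<lambda>c. c[z := 0]) ` V) \<le> card Z + 1"
  proof (rule insert.IH)
    show "zero_one_on n Z ((\<lambda>c. c[z := 0]) ` V)" using zero_one_on_erase_row insert.prems(3) z(1) .
    show "\<forall>i\<in>Z. \<forall>j\<in>Z. i \<noteq> j \<longrightarrow> \<not> shatters_pair ((\<lambda>c. c[z := 0]) ` V) i j"
      using insert.prems(4) z(2) shatters_pair_erase_row by (metis insertCI)
  qed (use insert.prems(1,2) in auto)
  moreover have "card {c \<in> V. c ! z = 0 \<and> c[z := 1] \<in> V} \<le> 1"
    using insert.prems(2-4) z(1) by (intro card_flippable_columns_le_one) auto
  moreover have "card V \<le> card ((\<lambda>c. c[z := 0]) ` V) + card {c \<in> V. c ! z = 0 \<and> c[z := 1] \<in> V}"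
    using insert.prems(2,3) by (intro card_le_card_erase_row) (auto simp: zero_one_on_def)
  ultimately show ?case using insert.hyps by simp
qed

lemma shatters_pair_mono: "shatters_pair V i j \<Longrightarrow> V \<subseteq> W \<Longrightarrow> shatters_pair W i j"
  unfolding shatters_pair_def by blast

lemma card_common_support_le:
  assumes "finite V" and cols: "\<forall>c\<in>V. length c = m \<and> (\<forall>x\<in>set c. x < 3)"
    and support: "\<forall>c\<in>V. {k. k < m \<and> c ! k \<noteq> 2} = Z"
    and no_shattered: "\<forall>(i, j)\<in>pairs m. \<not> shatters_pair V i j"
  shows "card V \<le> card Z + 1"
proof (cases "V = {}")
  case False
  then have Z: "Z \<subseteq> {..<m}" using support by auto
  show ?thesis
  proof (rule card_le_Suc_if_no_shattered_pair[OF finite_subset[OF Z finite_lessThan] Z \<open>finite V\<close>])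
    have "c ! k < 2" if "c \<in> V" "k \<in> Z" for c k
    proof -
      have "k < m" "c ! k \<noteq> 2" using support that by auto
      moreover have "c ! k < 3" using cols \<open>c \<in> V\<close> \<open>k < m\<close> by (auto simp: nth_mem)
      ultimately show "c ! k < 2" by linarith
    qed
    moreover have "c ! k = 2" if "c \<in> V" "k < m" "k \<notin> Z" for c k
      using support that by blast
    ultimately show "zero_one_on m Z V" using cols by (simp add: zero_one_on_def)
    show "\<forall>i\<in>Z. \<forall>j\<in>Z. i \<noteq> j \<longrightarrow> \<not> shatters_pair V i j"
    proof (intro ballI impI)
      fix i j assume "i \<in> Z" "j \<in> Z" "i \<noteq> j"
      then have "(min i j, max i j) \<in> pairs m" using Z by (auto simp: pairs_def)
      then have "\<not> shatters_pair V (min i j) (max i j)" using no_shattered by blast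
      then show "\<not> shatters_pair V i j" by (metis shatters_pair_commute min_def max_def)
    qed
  qed
qed simp

lemma card_le_base_size_if_no_shattered_pair:
  assumes "finite V" and cols: "\<forall>c\<in>V. length c = m \<and> (\<forall>x\<in>set c. x < 3)"
    and no_shattered: "\<forall>(i, j)\<in>pairs m. \<not> shatters_pair V i j"
  shows "card V \<le> base_size m"
proof -
  define support_class where "support_class Z = {c \<in> V. {k. k < m \<and> c ! k \<noteq> 2} = Z}" for Z
  have "V \<subseteq> (\<Union>Z\<in>Pow {..<m}. support_class Z)"
  proof
    fix c assume "c \<in> V"
    then have "c \<in> support_class {k. k < m \<and> c ! k \<noteq> 2}" by (simp add: support_class_def)
    then show "c \<in> (\<Union>Z\<in>Pow {..<m}. support_class Z)" by (rule UN_I[rotated]) auto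
  qed
  then have "card V \<le> card (\<Union>Z\<in>Pow {..<m}. support_class Z)"
    by (rule card_mono[rotated]) (simp add: support_class_def assms(1))
  also have "\<dots> \<le> (\<Sum>Z\<in>Pow {..<m}. card (support_class Z))"
    by (rule card_UN_le) simp
  also have "\<dots> \<le> base_size m"
    unfolding base_size_def
  proof (intro sum_mono card_common_support_le)
    fix Z
    have "support_class Z \<subseteq> V" by (auto simp: support_class_def)
    then show "finite (support_class Z)" "\<forall>c\<in>support_class Z. length c = m \<and> (\<forall>x\<in>set c. x < 3)"
      "\<forall>(i, j)\<in>pairs m. \<not> shatters_pair (support_class Z) i j"
      using assms by (auto intro: finite_subset dest: shatters_pair_mono)
  qed (simp add: support_class_def)
  finally show ?thesis .
qed

lemma rare_pattern_if_not_config_copiesK2: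
  assumes "distinct A" and "\<not> config 2 m (copiesK2 p) A" and "(i, j) \<in> pairs m"
  shows "\<exists>v. v \<in> set K2 \<and> card {c \<in> set A. [c ! i, c ! j] = v} < p"
proof -
  have "\<not> (\<forall>v. count_list (copiesK2 p) v \<le> card {c \<in> set A. [c ! i, c ! j] = v})"
    using assms(2,3)
    unfolding config_two_rows_iff[OF assms(1) copiesK2_column_length allI[OF count_list_copiesK2_rev]]
    by (auto simp: pairs_def)
  then obtain v where "card {c \<in> set A. [c ! i, c ! j] = v} < count_list (copiesK2 p) v"
    by (auto simp: not_le)
  then show ?thesis by (auto simp: count_list_copiesK2 split: if_splits)
qed

lemma length_le_if_not_config_copiesK2:
  assumes A: "is_smatrix m 3 A" "distinct A" and "\<not> config 2 m (copiesK2 p) A"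
  shows "length A \<le> base_size m + (p - 1) * card (pairs m)"
proof -
  have "\<exists>rare. \<forall>ij\<in>pairs m.
      rare ij \<in> set K2 \<and> card {c \<in> set A. [c ! fst ij, c ! snd ij] = rare ij} < p"
    using rare_pattern_if_not_config_copiesK2[OF A(2) assms(3)] by (intro bchoice ballI) simp
  then obtain rare where rare: "\<forall>ij\<in>pairs m.
      rare ij \<in> set K2 \<and> card {c \<in> set A. [c ! fst ij, c ! snd ij] = rare ij} < p" ..
  define R where "R = (\<Union>ij\<in>pairs m. {c \<in> set A. [c ! fst ij, c ! snd ij] = rare ij})"
  have "card R \<le> (\<Sum>ij\<in>pairs m. card {c \<in> set A. [c ! fst ij, c ! snd ij] = rare ij})"
    unfolding R_def by (rule card_UN_le[OF finite_pairs])
  also have "\<dots> \<le> (\<Sum>ij\<in>pairs m. p - 1)"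
    by (rule sum_mono) (use rare in fastforce)
  finally have card_R: "card R \<le> (p - 1) * card (pairs m)" by (simp add: mult.commute)
  \<comment> \<open>once the rare columns are removed, no pair of rows is shattered\<close>
  have "\<not> shatters_pair (set A - R) i j" if ij: "(i, j) \<in> pairs m" for i j
  proof
    assume "shatters_pair (set A - R) i j"
    moreover obtain x y where "rare (i, j) = [x, y]" "x < 2" "y < 2"
      using rare ij by (auto simp: K2_def)
    ultimately obtain c where "c \<in> set A - R" "[c ! i, c ! j] = rare (i, j)"
      unfolding shatters_pair_def by auto
    then show False using ij by (auto simp: R_def)
  qed
  then have "card (set A - R) \<le> base_size m"
    using A(1) by (intro card_le_base_size_if_no_shattered_pair) (auto simp: is_smatrix_def)
  moreover have "length A \<le> card R + card (set A - R)"
  proof -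
    have "R \<subseteq> set A" by (auto simp: R_def)
    then show ?thesis
      using distinct_card[OF A(2)] card_Diff_subset[of R "set A"] card_mono[of "set A" R]
      by (simp add: finite_subset)
  qed
  ultimately show ?thesis using card_R by linarith
qed

lemma forb_copiesK2_le:
  assumes "1 \<le> p"
  shows "forb m 3 2 (copiesK2 p) \<le> base_size m + (p - 1) * card (pairs m)"
proof (rule forb_le)
  show "copiesK2 p \<noteq> []" using assms by (cases p) (auto simp: copiesK2_def K2_def)
qed (rule length_le_if_not_config_copiesK2, simp_all add: simple_def)

lemma card_Un_UN_labelled:
  fixes label :: "'a \<Rightarrow> 'b set"
  assumes "finite B" and "finite I" and "\<And>i. i \<in> I \<Longrightarrow> finite (E i)"
    and "\<And>c. c \<in> B \<Longrightarrow> label c = {}"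
    and "\<And>i c. i \<in> I \<Longrightarrow> c \<in> E i \<Longrightarrow> label c = {i}"
  shows "card (B \<union> (\<Union>i\<in>I. E i)) = card B + (\<Sum>i\<in>I. card (E i))"
proof -
  have "E i \<inter> E j = {}" if "i \<in> I" "j \<in> I" "i \<noteq> j" for i j
    using assms(5)[OF that(1)] assms(5)[OF that(2)] that(3) by blast
  then have "card (\<Union>i\<in>I. E i) = (\<Sum>i\<in>I. card (E i))"
    using assms(2,3) by (simp add: card_UN_disjoint)
  moreover have "B \<inter> (\<Union>i\<in>I. E i) = {}" using assms(4,5) by fastforce
  ultimately show ?thesis using assms(1-3) by (simp add: card_Un_disjoint)
qed

locale row_blocks =
  fixes m s t :: nat
  assumes blocks_disjoint: "s + t \<le> m"
begin

definition pattern :: "nat \<Rightarrow> nat \<Rightarrow> nat list" where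
  "pattern i j = (if j < s then [0, 0] else if m - t \<le> i then [1, 1] else [0, 1])"

definition violations :: "nat list \<Rightarrow> (nat \<times> nat) set" where
  "violations c = {(i, j) \<in> pairs m. [c ! i, c ! j] = pattern i j}"

definition base_entry :: "nat set \<Rightarrow> nat option \<Rightarrow> nat \<Rightarrow> nat" where
  "base_entry Z x k =
     (if k \<notin> Z then 2
      else if k < s then (if x = Some k then 0 else 1)
      else if m - t \<le> k then (if x = Some k then 1 else 0)
      else if (\<exists>y. x = Some y \<and> k \<le> y) then 1 else 0)"

definition base_col :: "nat set \<Rightarrow> nat option \<Rightarrow> nat list" where
  "base_col Z x = map (base_entry Z x) [0..<m]"

lemma base_col_nth: "k < m \<Longrightarrow> base_col Z x ! k = base_entry Z x k"
  by (simp add: base_col_def)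

lemma violations_base_col: "violations (base_col Z x) = {}"
  using blocks_disjoint by (auto simp: violations_def pairs_def pattern_def base_col_nth base_entry_def split: if_splits)

lemma support_base_col: "Z \<subseteq> {..<m} \<Longrightarrow> {k. k < m \<and> base_col Z x ! k \<noteq> 2} = Z"
  by (force simp: base_col_nth base_entry_def split: if_splits)

lemma base_entry_Some_self: "y \<in> Z \<Longrightarrow> base_entry Z (Some y) y \<noteq> base_entry Z None y"
  by (simp add: base_entry_def)

lemma base_entry_Some_differs_le:
  "base_entry Z (Some y) k \<noteq> base_entry Z None k \<Longrightarrow> k \<le> y"
  by (auto simp: base_entry_def split: if_splits)

lemma base_col_Some_eq:
  assumes "y \<in> Z" "Z \<subseteq> {..<m}" "x \<in> insert None (Some ` Z)"
    and eq: "base_col Z (Some y) = base_col Z x"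
  shows "x = Some y"
proof -
  have entry_eq: "base_entry Z (Some y) k = base_entry Z x k" if "k < m" for k
    using eq that by (metis base_col_nth)
  show ?thesis
  proof (cases x)
    case None
    then show ?thesis using entry_eq[of y] base_entry_Some_self[OF assms(1)] assms(1,2) by auto
  next
    case (Some y')
    then have "y' \<in> Z" using assms(3) by auto
    have "y \<le> y'"
      using entry_eq[of y] base_entry_Some_self[OF assms(1)] base_entry_Some_differs_le[of Z y' y]
        assms(1,2) Some by auto
    moreover have "y' \<le> y"
      using entry_eq[of y'] base_entry_Some_self[OF \<open>y' \<in> Z\<close>] base_entry_Some_differs_le[of Z y y']
        \<open>y' \<in> Z\<close> assms(2) Some by auto
    ultimately show ?thesis using Some by simp
  qed
qed

lemma inj_on_base_col:
  "inj_on (\<lambda>(Z, x). base_col Z x) (SIGMA Z:Pow {..<m}. insert None (Some ` Z))"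
proof (rule inj_onI, clarify)
  fix Z x Z' x'
  assume Z: "Z \<subseteq> {..<m}" "x \<in> insert None (Some ` Z)"
    and Z': "Z' \<subseteq> {..<m}" "x' \<in> insert None (Some ` Z')"
    and eq: "base_col Z x = base_col Z' x'"
  have "Z = Z'" using support_base_col[OF Z(1), of x] support_base_col[OF Z'(1), of x'] eq by simp
  moreover have "x = x'"
  proof (cases "x = None \<and> x' = None")
    case False
    then consider y where "y \<in> Z" "x = Some y" | y' where "y' \<in> Z" "x' = Some y'"
      using Z Z' \<open>Z = Z'\<close> by auto
    then show ?thesis
      by cases (use base_col_Some_eq Z Z' eq \<open>Z = Z'\<close> in \<open>metis\<close>)+
  qed auto
  ultimately show "Z = Z' \<and> x = x'" by simp
qed

lemma card_base_cols:
  "card ((\<lambda>(Z, x). base_col Z x) ` (SIGMA Z:Pow {..<m}. insert None (Some ` Z))) = base_size m"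
proof -
  have "card (SIGMA Z:Pow {..<m}. insert None (Some ` Z)) = (\<Sum>Z\<in>Pow {..<m}. card (insert None (Some ` Z)))"
    by (rule card_SigmaI) (auto intro: finite_subset)
  also have "\<dots> = base_size m"
    unfolding base_size_def by (rule sum.cong) (auto simp: card_image finite_subset)
  finally show ?thesis by (simp add: card_image[OF inj_on_base_col])
qed

definition base_cols :: "nat list set" where
  "base_cols = (\<lambda>(Z, x). base_col Z x) ` (SIGMA Z:Pow {..<m}. insert None (Some ` Z))"

definition free_rows :: "nat \<Rightarrow> nat \<Rightarrow> nat set" where
  "free_rows i j = ({..<s} \<union> {m - t..<m}) - {i, j}"

definition free_value :: "nat \<Rightarrow> nat" where
  "free_value k = (if k < s then 1 else 0)"

lemma eq_pattern_iff: "[x, y] = pattern a b \<longleftrightarrow> x = pattern a b ! 0 \<and> y = pattern a b ! 1"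
  by (auto simp: pattern_def)

lemma pattern_less_2: "pattern a b ! 0 < 2" "pattern a b ! 1 < 2"
  by (simp_all add: pattern_def)

lemma pattern_fst_ne_free_value:
  "a < b \<Longrightarrow> a \<in> {..<s} \<union> {m - t..<m} \<Longrightarrow> pattern a b ! 0 \<noteq> free_value a"
  using blocks_disjoint by (auto simp: pattern_def free_value_def)

lemma pattern_snd_ne_free_value:
  "a < b \<Longrightarrow> b \<in> {..<s} \<union> {m - t..<m} \<Longrightarrow> pattern a b ! 1 \<noteq> free_value b"
  using blocks_disjoint by (auto simp: pattern_def free_value_def)

definition ext_entry :: "nat \<Rightarrow> nat \<Rightarrow> nat set \<Rightarrow> nat \<Rightarrow> nat" where
  "ext_entry i j W k =
     (if k = i then pattern i j ! 0 else if k = j then pattern i j ! 1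
      else if k \<in> W then free_value k else 2)"

definition ext_col :: "nat \<Rightarrow> nat \<Rightarrow> nat set \<Rightarrow> nat list" where
  "ext_col i j W = map (ext_entry i j W) [0..<m]"

lemma ext_col_nth: "k < m \<Longrightarrow> ext_col i j W ! k = ext_entry i j W k"
  by (simp add: ext_col_def)

lemma violations_ext_col:
  assumes ij: "(i, j) \<in> pairs m" and W: "W \<subseteq> free_rows i j"
  shows "violations (ext_col i j W) = {(i, j)}"
proof (intro equalityI subsetI)
  fix ab assume "ab \<in> violations (ext_col i j W)"
  then obtain a b where ab: "ab = (a, b)" "a < b" "b < m"
    and match: "ext_entry i j W a = pattern a b ! 0" "ext_entry i j W b = pattern a b ! 1"
    by (auto simp: violations_def pairs_def ext_col_nth eq_pattern_iff)
  show "ab \<in> {(i, j)}"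
  proof (rule ccontr)
    assume "ab \<notin> {(i, j)}"
    then have "a \<notin> {i, j} \<or> b \<notin> {i, j}" using ab(1,2) ij by (auto simp: pairs_def)
    then show False
    proof
      assume "a \<notin> {i, j}"
      then show False
        using match(1) pattern_less_2(1)[of a b] pattern_fst_ne_free_value[OF ab(2)] W
        by (auto simp: ext_entry_def free_rows_def split: if_splits)
    next
      assume "b \<notin> {i, j}"
      then show False
        using match(2) pattern_less_2(2)[of a b] pattern_snd_ne_free_value[OF ab(2)] W
        by (auto simp: ext_entry_def free_rows_def split: if_splits)
    qed
  qed
next
  fix ab assume "ab \<in> {(i, j)}"
  then show "ab \<in> violations (ext_col i j W)"
    using ij by (auto simp: violations_def pairs_def ext_col_nth ext_entry_def pattern_def)
qed

lemma inj_on_ext_col: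
  assumes "(i, j) \<in> pairs m"
  shows "inj_on (ext_col i j) (Pow (free_rows i j))"
proof (rule inj_onI)
  have support: "{k. k < m \<and> ext_col i j W ! k \<noteq> 2} - {i, j} = W" if "W \<subseteq> free_rows i j" for W
  proof -
    have "W \<subseteq> {..<m} - {i, j}" using that blocks_disjoint by (auto simp: free_rows_def)
    then show ?thesis by (auto simp: ext_col_nth ext_entry_def free_value_def split: if_splits)
  qed
  fix W W' assume W: "W \<in> Pow (free_rows i j)" and W': "W' \<in> Pow (free_rows i j)"
    and eq: "ext_col i j W = ext_col i j W'"
  have "W = {k. k < m \<and> ext_col i j W ! k \<noteq> 2} - {i, j}" using support W by simp
  also have "\<dots> = {k. k < m \<and> ext_col i j W' ! k \<noteq> 2} - {i, j}" by (simp only: eq)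
  also have "\<dots> = W'" using support W' by simp
  finally show "W = W'" .
qed

lemma card_free_rows: "s + t - 2 \<le> card (free_rows i j)"
proof -
  have "card ({..<s} \<union> {m - t..<m}) = s + t"
    using blocks_disjoint by (subst card_Un_disjoint) auto
  moreover have "card {i, j} \<le> 2" by (simp add: card_insert_le_m1)
  ultimately show ?thesis
    unfolding free_rows_def using diff_card_le_card_Diff[of "{i, j}" "{..<s} \<union> {m - t..<m}"] by simp
qed

lemma base_col_column: "length (base_col Z x) = m \<and> set (base_col Z x) \<subseteq> {..<3}"
  by (auto simp: base_col_def base_entry_def)

lemma ext_col_column: "length (ext_col i j W) = m \<and> set (ext_col i j W) \<subseteq> {..<3}"
  by (auto simp: ext_col_def ext_entry_def pattern_def free_value_def)

lemma finite_free_rows: "finite (free_rows i j)"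
  by (simp add: free_rows_def)

lemma card_base_cols_eq: "card base_cols = base_size m"
  by (simp add: base_cols_def card_base_cols)

lemma exists_matrix_with_few_violations:
  fixes \<beta> :: "nat \<times> nat \<Rightarrow> nat"
  assumes budget: "\<And>ij. ij \<in> pairs m \<Longrightarrow> \<beta> ij \<le> 2 ^ (s + t - 2)"
  obtains A where "is_smatrix m 3 A" and "distinct A"
    and "length A = base_size m + (\<Sum>ij\<in>pairs m. \<beta> ij)"
    and "\<And>ij. ij \<in> pairs m \<Longrightarrow> card {c \<in> set A. ij \<in> violations c} \<le> \<beta> ij"
proof -
  have "\<exists>T. T \<subseteq> Pow (free_rows (fst ij) (snd ij)) \<and> card T = \<beta> ij" if "ij \<in> pairs m" for ij
  proof -
    have "(2::nat) ^ (s + t - 2) \<le> 2 ^ card (free_rows (fst ij) (snd ij))"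
      using card_free_rows by (intro power_increasing) auto
    then have "\<beta> ij \<le> 2 ^ card (free_rows (fst ij) (snd ij))"
      using budget[OF that] by linarith
    then have "\<beta> ij \<le> card (Pow (free_rows (fst ij) (snd ij)))"
      by (simp add: card_Pow finite_free_rows)
    then show ?thesis by (meson obtain_subset_with_card_n)
  qed
  then have "\<exists>Ws. \<forall>ij\<in>pairs m. Ws ij \<subseteq> Pow (free_rows (fst ij) (snd ij)) \<and> card (Ws ij) = \<beta> ij"
    by (intro bchoice ballI)
  then obtain Ws where Ws: "\<And>ij. ij \<in> pairs m \<Longrightarrow>
      Ws ij \<subseteq> Pow (free_rows (fst ij) (snd ij)) \<and> card (Ws ij) = \<beta> ij" by blast
  define E where "E ij = ext_col (fst ij) (snd ij) ` Ws ij" for ij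
  define C where "C = base_cols \<union> (\<Union>ij\<in>pairs m. E ij)"
  have violations_E: "violations c = {ij}" if "ij \<in> pairs m" "c \<in> E ij" for ij c
    using that Ws[OF that(1)] violations_ext_col[of "fst ij" "snd ij"] by (auto simp: E_def)
  have card_E: "card (E ij) = \<beta> ij" if "ij \<in> pairs m" for ij
    using Ws[OF that] inj_on_subset[OF inj_on_ext_col[of "fst ij" "snd ij"]] that
    by (simp add: E_def card_image)
  have finite_E: "finite (E ij)" if "ij \<in> pairs m" for ij
  proof -
    have "finite (Ws ij)" using Ws[OF that] finite_free_rows by (meson finite_Pow_iff finite_subset)
    then show ?thesis by (simp add: E_def)
  qed
  have finite_base_cols: "finite base_cols"
    by (auto simp: base_cols_def intro!: finite_SigmaI finite_imageI intro: finite_subset)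
  have card_C: "card C = base_size m + (\<Sum>ij\<in>pairs m. \<beta> ij)"
    unfolding C_def
    by (subst card_Un_UN_labelled[where label = violations])
      (use finite_base_cols finite_E violations_E card_E card_base_cols_eq
        in \<open>auto simp: base_cols_def violations_base_col\<close>)
  have "finite C" using finite_base_cols finite_E by (simp add: C_def)
  then obtain A where A: "set A = C" "distinct A" using finite_distinct_list by blast
  show ?thesis
  proof
    have "C \<subseteq> {c. length c = m \<and> set c \<subseteq> {..<3}}"
      using base_col_column ext_col_column by (fastforce simp: C_def E_def base_cols_def)
    then show "is_smatrix m 3 A" using A(1) by (auto simp: is_smatrix_def)
    show "distinct A" by (fact A(2))
    show "length A = base_size m + (\<Sum>ij\<in>pairs m. \<beta> ij)"
      using card_C distinct_card[OF A(2)] A(1) by simp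
    fix ij assume ij: "ij \<in> pairs m"
    have "{c \<in> set A. ij \<in> violations c} \<subseteq> E ij"
      using A(1) violations_E by (auto simp: C_def base_cols_def violations_base_col)
    then show "card {c \<in> set A. ij \<in> violations c} \<le> \<beta> ij"
      using card_mono[OF finite_E[OF ij]] card_E[OF ij] by fastforce
  qed
qed

lemma forb_ge_pattern_budget:
  assumes columns: "\<forall>v\<in>set F. length v = 2"
    and symmetric: "\<forall>v. count_list F (rev v) = count_list F v"
    and counts: "\<And>i j. (i, j) \<in> pairs m \<Longrightarrow>
      0 < count_list F (pattern i j) \<and> count_list F (pattern i j) \<le> 2 ^ (s + t - 2) + 1"
  shows "base_size m + (\<Sum>(i, j)\<in>pairs m. count_list F (pattern i j) - 1) \<le> forb m 3 2 F"
proof -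
  define \<beta> where "\<beta> = (\<lambda>(i, j). count_list F (pattern i j) - 1)"
  have "\<beta> ij \<le> 2 ^ (s + t - 2)" if "ij \<in> pairs m" for ij
    using counts[of "fst ij" "snd ij"] that by (auto simp: \<beta>_def split_def)
  then obtain A where A: "is_smatrix m 3 A" "distinct A"
    and len: "length A = base_size m + (\<Sum>ij\<in>pairs m. \<beta> ij)"
    and few: "\<And>ij. ij \<in> pairs m \<Longrightarrow> card {c \<in> set A. ij \<in> violations c} \<le> \<beta> ij"
    by (rule exists_matrix_with_few_violations) blast+
  have "\<not> config 2 m F A"
  proof
    assume "config 2 m F A"
    then obtain i j where ij: "i < j" "j < m"
      and "\<forall>v. count_list F v \<le> card {c \<in> set A. [c ! i, c ! j] = v}"
      using config_two_rows_iff[OF A(2) columns symmetric] by blast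
    then have "count_list F (pattern i j) \<le> card {c \<in> set A. (i, j) \<in> violations c}"
      by (simp add: violations_def pairs_def)
    moreover have "(i, j) \<in> pairs m" using ij by (simp add: pairs_def)
    ultimately show False using few[of "(i, j)"] counts[of i j] by (simp add: \<beta>_def) linarith
  qed
  then show ?thesis using length_le_forb[OF A(1)] A(2) len by (simp add: simple_def \<beta>_def)
qed

lemma card_diagonal_pattern_pairs:
  "card {(i, j) \<in> pairs m. pattern i j \<noteq> [0, 1]} \<le> (s choose 2) + (t choose 2)"
proof -
  have "{(i, j) \<in> pairs m. pattern i j \<noteq> [0, 1]} \<subseteq>
      pairs s \<union> (\<lambda>(i, j). (i + (m - t), j + (m - t))) ` pairs t"
  proof
    fix ij assume "ij \<in> {(i, j) \<in> pairs m. pattern i j \<noteq> [0, 1]}"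
    then obtain i j where ij: "ij = (i, j)" "(i, j) \<in> pairs m" "pattern i j \<noteq> [0, 1]" by blast
    show "ij \<in> pairs s \<union> (\<lambda>(i, j). (i + (m - t), j + (m - t))) ` pairs t"
    proof (cases "j < s")
      case True
      then show ?thesis using ij by (auto simp: pairs_def)
    next
      case False
      then have "m - t \<le> i" "i < j" "j < m" using ij by (auto simp: pattern_def pairs_def split: if_splits)
      then have "(i - (m - t), j - (m - t)) \<in> pairs t" "ij = (i - (m - t) + (m - t), j - (m - t) + (m - t))"
        using ij(1) by (auto simp: pairs_def)
      then show ?thesis by force
    qed
  qed
  then have "card {(i, j) \<in> pairs m. pattern i j \<noteq> [0, 1]} \<le> card (pairs s) + card (pairs t)"
    by (meson card_Un_le card_image_le card_mono finite_Un finite_imageI finite_pairs le_trans add_left_mono)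
  then show ?thesis by (simp add: card_pairs)
qed

lemma forb_Fmat_ge:
  assumes "q < p" and "p - 1 \<le> 2 ^ (s + t - 2)"
  shows "base_size m + (p - 1) * card (pairs m)
           \<le> forb m 3 2 (Fmat (p - q) p p (p - q)) + q * ((s choose 2) + (t choose 2))"
proof -
  let ?F = "Fmat (p - q) p p (p - q)"
  let ?D = "{(i, j) \<in> pairs m. pattern i j \<noteq> [0, 1]}"
  have count: "count_list ?F (pattern i j) = (if pattern i j = [0, 1] then p else p - q)" for i j
    by (simp add: count_list_Fmat pattern_def)
  have "base_size m + (\<Sum>(i, j)\<in>pairs m. count_list ?F (pattern i j) - 1) \<le> forb m 3 2 ?F"
  proof (rule forb_ge_pattern_budget)
    show "\<forall>v\<in>set ?F. length v = 2" by (auto simp: Fmat_def)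
    show "\<forall>v. count_list ?F (rev v) = count_list ?F v" by (auto simp: count_list_Fmat rev_swap)
    have "p \<le> 2 ^ (s + t - 2) + 1" using assms(2) by linarith
    then show "0 < count_list ?F (pattern i j) \<and> count_list ?F (pattern i j) \<le> 2 ^ (s + t - 2) + 1"
      for i j using assms(1) by (auto simp: count)
  qed
  moreover have "(\<Sum>(i, j)\<in>pairs m. count_list ?F (pattern i j) - 1) + q * card ?D
      = (p - 1) * card (pairs m)"
  proof -
    have "(\<Sum>(i, j)\<in>pairs m. count_list ?F (pattern i j) - 1) + (\<Sum>(i, j)\<in>pairs m. if (i, j) \<in> ?D then q else 0)
        = (\<Sum>(i, j)\<in>pairs m. p - 1)"
      unfolding sum.distrib[symmetric] by (rule sum.cong) (use assms(1) in \<open>auto simp: count\<close>)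
    moreover have "(\<Sum>(i, j)\<in>pairs m. if (i, j) \<in> ?D then q else 0) = q * card ?D"
      by (simp add: sum.If_cases split_def Int_def)
    ultimately show ?thesis by simp
  qed
  moreover have "q * card ?D \<le> q * ((s choose 2) + (t choose 2))"
    using card_diagonal_pattern_pairs by simp
  ultimately show ?thesis by linarith
qed

end

lemma le_two_power_ceiling_log:
  assumes "1 \<le> n"
  shows "n \<le> 2 ^ nat \<lceil>log 2 (real n)\<rceil>"
proof -
  define k where "k = nat \<lceil>log 2 (real n)\<rceil>"
  have "0 \<le> log 2 (real n)" using assms by simp
  then have "log 2 (real n) \<le> real k" unfolding k_def by linarith
  then have "2 powr log 2 (real n) \<le> 2 powr real k" by (rule powr_mono) simp
  then have "real n \<le> 2 ^ k" using assms by (simp add: powr_realpow)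
  then show ?thesis unfolding k_def[symmetric] by (metis of_nat_le_iff of_nat_numeral of_nat_power)
qed

lemma diff_one_le_choose_two: "n - 1 \<le> n choose 2"
  by (cases n) (simp_all add: numeral_2_eq_2)

theorem mainTheorem13:
  fixes p q m r N :: nat
  assumes "p \<ge> 2"
    and "r = nat \<lceil>log 2 (real (p - 1))\<rceil>"
    and "N = (((r + 1) div 2 + 1) choose 2) + ((r div 2 + 1) choose 2)"
    and "q \<le> p - 1"
    and "m \<ge> 2 * N + 2"
  shows "int (forb m 3 2 (Fmat (p - q) p p (p - q)))
           \<ge> int (forb m 3 2 (copiesK2 p)) - int q * int N"
proof -
  define s where "s = (r + 1) div 2 + 1"
  define t where "t = r div 2 + 1"
  have st: "s + t - 2 = r" and N: "N = (s choose 2) + (t choose 2)"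
    using assms(3) by (simp_all add: s_def t_def)
  have "s + t \<le> m"
    using diff_one_le_choose_two[of s] diff_one_le_choose_two[of t] st N assms(5)
    by (simp add: s_def t_def)
  then interpret row_blocks m s t by unfold_locales
  have "p - 1 \<le> 2 ^ (s + t - 2)" using le_two_power_ceiling_log[of "p - 1"] assms(1,2) st by simp
  then have "base_size m + (p - 1) * card (pairs m) \<le> forb m 3 2 (Fmat (p - q) p p (p - q)) + q * N"
    using forb_Fmat_ge assms(1,4) N by simp
  moreover have "forb m 3 2 (copiesK2 p) \<le> base_size m + (p - 1) * card (pairs m)"
    using forb_copiesK2_le assms(1) by simp
  ultimately have "int (forb m 3 2 (copiesK2 p)) \<le> int (forb m 3 2 (Fmat (p - q) p p (p - q))) + int q * int N"
    by (metis le_trans of_nat_add of_nat_le_iff of_nat_mult)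
  then show ?thesis by linarith
qed

end
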